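(* If $X$ is uncountable and $B \subseteq X$ is a Bernstein set, then the game $\Gamma(1_B)$ is not determined, i.e. neither player has a winning strategy.
   Context: Let $A$ be a non-empty countable set and $T$ a pruned tree on $A$ (a set of finite sequences of elements of $A$, closed under initial segments, in which every sequence has a proper extension in $T$). Let $X$ be the set of infinite branches of $T$, with the topology generated by the cylinder sets $O(s) = \{x \in X : s \text{ is an initial segment of } x\}$, $s \in T$. A set $B \subseteq X$ is a Bernstein set if neither $B$ nor $X \setminus B$ contains a non-empty perfect set; $1_B$ is the indicator function of $B$. For $f : X \to \mathbb{R}$, the game $\Gamma(f)$: Player I and Player II alternate, Player I moving first; Player I plays $x_0, x_1, \dots \in A$ subject to $(x_0,\dots,x_t) \in T$ for all $t$, and after each move $x_t$ Player II plays a real number $v_t$. Player II wins the run iff $f(x_0,x_1,\dots) = \limsup_{t\to\infty} v_t$; otherwise Player I wins. *)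

theory Defs
  imports "HOL-Analysis.Analysis" "HOL-Library.Liminf_Limsup" "HOL-Library.Sublist"
begin

definition init_seg :: "(nat \<Rightarrow> 'b) \<Rightarrow> nat \<Rightarrow> 'b list" where
  "init_seg x n = map x [0..<n]"

definition pruned_tree :: "'a set \<Rightarrow> 'a list set \<Rightarrow> bool" where
  "pruned_tree A T \<longleftrightarrow> T \<subseteq> lists A
     \<and> (\<forall>s\<in>T. \<forall>r. prefix r s \<longrightarrow> r \<in> T)
     \<and> (\<forall>s\<in>T. \<exists>t\<in>T. strict_prefix s t)"

definition branches :: "'a list set \<Rightarrow> (nat \<Rightarrow> 'a) set" where
  "branches T = {x. \<forall>n. init_seg x n \<in> T}"

definition cyl :: "'a list set \<Rightarrow> 'a list \<Rightarrow> (nat \<Rightarrow> 'a) set" where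
  "cyl T s = {x \<in> branches T. init_seg x (length s) = s}"

definition tree_topology :: "'a list set \<Rightarrow> (nat \<Rightarrow> 'a) topology" where
  "tree_topology T = topology_generated_by (cyl T ` T)"

definition perfect_in :: "'b topology \<Rightarrow> 'b set \<Rightarrow> bool" where
  "perfect_in Tp P \<longleftrightarrow> closedin Tp P \<and> Tp derived_set_of P = P"

definition bernstein_in :: "'b topology \<Rightarrow> 'b set \<Rightarrow> bool" where
  "bernstein_in Tp B \<longleftrightarrow> B \<subseteq> topspace Tp
     \<and> \<not> (\<exists>P. P \<noteq> {} \<and> perfect_in Tp P \<and> P \<subseteq> B)
     \<and> \<not> (\<exists>P. P \<noteq> {} \<and> perfect_in Tp P \<and> P \<subseteq> topspace Tp - B)"

text \<open>A strategy for Player I maps (I's previous moves x_0..x_{t-1},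
  II's previous moves v_0..v_{t-1}) to x_t; it must always produce legal moves.
  A strategy for Player II maps (x_0..x_t, v_0..v_{t-1}) to v_t.\<close>
definition I_winning :: "'a list set \<Rightarrow> ((nat \<Rightarrow> 'a) \<Rightarrow> real) \<Rightarrow> ('a list \<Rightarrow> real list \<Rightarrow> 'a) \<Rightarrow> bool" where
  "I_winning T f \<sigma> \<longleftrightarrow>
     (\<forall>x v. (\<forall>t. x t = \<sigma> (init_seg x t) (init_seg v t)) \<longrightarrow>
        (\<forall>t. init_seg x (Suc t) \<in> T) \<and>
        ereal (f x) \<noteq> limsup (\<lambda>t. ereal (v t)))"

definition II_winning :: "'a list set \<Rightarrow> ((nat \<Rightarrow> 'a) \<Rightarrow> real) \<Rightarrow> ('a list \<Rightarrow> real list \<Rightarrow> real) \<Rightarrow> bool" where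
  "II_winning T f \<tau> \<longleftrightarrow>
     (\<forall>x v. (\<forall>t. init_seg x (Suc t) \<in> T) \<longrightarrow>
        (\<forall>t. v t = \<tau> (init_seg x (Suc t)) (init_seg v t)) \<longrightarrow>
        ereal (f x) = limsup (\<lambda>t. ereal (v t)))"

definition game_determined :: "'a list set \<Rightarrow> ((nat \<Rightarrow> 'a) \<Rightarrow> real) \<Rightarrow> bool" where
  "game_determined T f \<longleftrightarrow> (\<exists>\<sigma>. I_winning T f \<sigma>) \<or> (\<exists>\<tau>. II_winning T f \<tau>)"

end

(*
  Let II play only 0s and 1s. A winning strategy for I answers every finite 0/1 word u
  with a position of the tree, and two 0/1 extensions of u must eventually get incomparable
  answers: otherwise u000... and u111... produce the same run, whose value would have to differ
  from both limsups 0 and 1. Following these splittings and inserting a 1 after each of them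
  yields a perfect set of runs along which II's moves have limsup 1, so none of them lies in B.

  A strategy for II gives numbers V x t depending only on x 0, ..., x t, with
  limsup V x = 1_B x on a winning strategy. Discard the countably many countable cylinders; in
  what remains, either below some node every node extends to one on whose cylinder V exceeds 1/2
  at arbitrarily late times, and a splitting construction gives a perfect subset of B; or some
  node and time n admit no such extension, and then V stays below 1/2 after n on the whole
  remaining part of that cylinder, a perfect subset of the complement of B.
*)
theory Submission
  imports Defs
begin

lemma length_init_seg [simp]: "length (init_seg x n) = n"
  by (simp add: init_seg_def)

lemma nth_init_seg [simp]: "i < n \<Longrightarrow> init_seg x n ! i = x i"
  by (simp add: init_seg_def)

lemma init_seg_0 [simp]: "init_seg x 0 = []"
  by (simp add: init_seg_def)

lemma init_seg_Suc: "init_seg x (Suc n) = init_seg x n @ [x n]"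
  by (simp add: init_seg_def)

lemma take_init_seg: "m \<le> n \<Longrightarrow> take m (init_seg x n) = init_seg x m"
  by (simp add: init_seg_def take_map)

lemma init_seg_nth: "init_seg (nth u) (length u) = u"
  by (simp add: init_seg_def map_nth)

lemma init_seg_eq_iff: "init_seg x n = init_seg y n \<longleftrightarrow> (\<forall>i<n. x i = y i)"
  by (auto simp: init_seg_def)

lemma prefix_init_seg: "m \<le> n \<Longrightarrow> prefix (init_seg x m) (init_seg x n)"
  by (metis take_init_seg take_is_prefix)

lemma prefix_init_seg_iff: "prefix s (init_seg x n) \<longleftrightarrow> length s \<le> n \<and> init_seg x (length s) = s"
  by (metis length_init_seg prefix_length_le take_init_seg take_is_prefix prefix_def
      append_take_drop_id append_eq_conv_conj)

lemma eq_if_init_seg_eq_unbounded: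
  assumes "\<And>k. init_seg x (f k) = init_seg y (f k)" and "\<And>k. k \<le> f k"
  shows "x = y"
proof
  fix i
  have "i < f (Suc i)" using assms(2)[of "Suc i"] by simp
  then show "x i = y i" using assms(1)[of "Suc i"] by (simp add: init_seg_eq_iff)
qed

lemma parallel_prefixI: "a \<parallel> b \<Longrightarrow> prefix a a' \<Longrightarrow> prefix b b' \<Longrightarrow> a' \<parallel> b'"
  by (auto simp: prefix_def intro: parallel_appendI)

lemma init_seg_diagonal:
  assumes "\<And>k. prefix (c k) (c (Suc k))" and "\<And>k. k \<le> length (c k)"
  shows "init_seg (\<lambda>i. c (Suc i) ! i) (length (c k)) = c k"
proof -
  have mono: "prefix (c a) (c b)" if "a \<le> b" for a b
    using that by (induction b) (auto simp: le_Suc_eq intro: prefix_order.trans assms(1))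
  have "c (Suc i) ! i = c k ! i" if "i < length (c k)" for i
  proof (cases "Suc i \<le> k")
    case True
    have "i < length (c (Suc i))" using assms(2)[of "Suc i"] by simp
    then show ?thesis using mono[OF True] by (auto simp: prefix_def nth_append)
  next
    case False
    then show ?thesis using mono[of k "Suc i"] that by (auto simp: prefix_def nth_append)
  qed
  then show ?thesis by (intro nth_equalityI) auto
qed

lemma prefix_closed_tree: "pruned_tree A T \<Longrightarrow> s \<in> T \<Longrightarrow> prefix r s \<Longrightarrow> r \<in> T"
  unfolding pruned_tree_def by auto

lemma in_cyl: "x \<in> cyl T s \<longleftrightarrow> x \<in> branches T \<and> init_seg x (length s) = s"
  by (simp add: cyl_def)

lemma cyl_init_seg: "x \<in> branches T \<Longrightarrow> x \<in> cyl T (init_seg x n)"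
  by (simp add: cyl_def)

lemma cyl_subset_branches: "cyl T s \<subseteq> branches T"
  by (auto simp: cyl_def)

lemma cyl_Nil: "cyl T [] = branches T"
  by (auto simp: cyl_def)

lemma cyl_antimono: "prefix r s \<Longrightarrow> cyl T s \<subseteq> cyl T r"
proof
  fix x assume "prefix r s" "x \<in> cyl T s"
  then have "prefix r (init_seg x (length s))" by (simp add: in_cyl)
  then show "x \<in> cyl T r" using \<open>x \<in> cyl T s\<close> by (simp add: in_cyl prefix_init_seg_iff)
qed

lemma cyl_init_seg_antimono: "m \<le> n \<Longrightarrow> cyl T (init_seg x n) \<subseteq> cyl T (init_seg x m)"
  by (intro cyl_antimono prefix_init_seg)

lemma not_parallel_if_cyl: "x \<in> cyl T s \<Longrightarrow> x \<in> cyl T s' \<Longrightarrow> \<not> s \<parallel> s'"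
  unfolding in_cyl parallel_def by (metis nat_le_linear prefix_init_seg)

lemma branches_Nil: "x \<in> branches T \<Longrightarrow> [] \<in> T"
  using init_seg_0[of x] by (metis branches_def mem_Collect_eq)

lemma topspace_tree_topology: "branches T \<noteq> {} \<Longrightarrow> topspace (tree_topology T) = branches T"
  unfolding tree_topology_def topology_generated_by_topspace
  by (auto simp: cyl_def init_seg_def intro!: bexI[of _ "[]"] branches_Nil)

lemma openin_tree_topologyD:
  assumes "openin (tree_topology T) U" "x \<in> U"
  shows "\<exists>n. cyl T (init_seg x n) \<subseteq> U"
proof -
  have "generate_topology_on (cyl T ` T) U"
    using assms(1) unfolding tree_topology_def by (rule openin_topology_generated_by)
  then show ?thesis using assms(2)
  proof (induction arbitrary: x)
    case (Int a b)
    then obtain n1 n2 where "cyl T (init_seg x n1) \<subseteq> a" "cyl T (init_seg x n2) \<subseteq> b" by blast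
    then have "cyl T (init_seg x (max n1 n2)) \<subseteq> a \<inter> b"
      using cyl_init_seg_antimono[of n1 "max n1 n2" T x] cyl_init_seg_antimono[of n2 "max n1 n2" T x]
      by auto
    then show ?case by blast
  next
    case (Basis s)
    then obtain q where "s = cyl T q" "init_seg x (length q) = q" by (auto simp: in_cyl)
    then show ?case by (intro exI[of _ "length q"]) auto
  next
    case (UN K)
    then show ?case by blast
  qed simp
qed

lemma openin_tree_topologyI:
  assumes "U \<subseteq> branches T" "\<And>x. x \<in> U \<Longrightarrow> \<exists>n. cyl T (init_seg x n) \<subseteq> U"
  shows "openin (tree_topology T) U"
proof -
  define K where "K = {c \<in> cyl T ` T. c \<subseteq> U}"
  have "U = \<Union>K"
  proof
    show "U \<subseteq> \<Union>K"
    proof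
      fix x assume x: "x \<in> U"
      then obtain n where "cyl T (init_seg x n) \<subseteq> U" using assms(2) by blast
      moreover have "x \<in> branches T" using x assms(1) by blast
      ultimately show "x \<in> \<Union>K"
        unfolding K_def by (auto simp: branches_def intro!: cyl_init_seg)
    qed
  qed (auto simp: K_def)
  moreover have "generate_topology_on (cyl T ` T) (\<Union>K)"
    by (rule generate_topology_on.UN) (auto simp: K_def intro: generate_topology_on.Basis)
  ultimately show ?thesis unfolding tree_topology_def openin_topology_generated_by_iff by simp
qed

lemma perfect_in_tree_topologyI:
  assumes P: "P \<subseteq> branches T" "P \<noteq> {}"
    and closed: "\<And>x. x \<in> branches T \<Longrightarrow> x \<notin> P \<Longrightarrow> \<exists>n. cyl T (init_seg x n) \<inter> P = {}"
    and dense: "\<And>x n. x \<in> P \<Longrightarrow> \<exists>y\<in>P. y \<noteq> x \<and> y \<in> cyl T (init_seg x n)"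
  shows "perfect_in (tree_topology T) P"
proof -
  have "branches T \<noteq> {}" using P by blast
  then have top: "topspace (tree_topology T) = branches T" by (rule topspace_tree_topology)
  have op: "openin (tree_topology T) (branches T - P)"
  proof (rule openin_tree_topologyI)
    show "branches T - P \<subseteq> branches T" by blast
    fix x assume "x \<in> branches T - P"
    then obtain n where n: "cyl T (init_seg x n) \<inter> P = {}" using closed by blast
    have "cyl T (init_seg x n) \<subseteq> branches T - P" using n cyl_subset_branches[of T "init_seg x n"] by blast
    then show "\<exists>n. cyl T (init_seg x n) \<subseteq> branches T - P" by blast
  qed
  have clo: "closedin (tree_topology T) P"
    unfolding closedin_def top using P(1) op by (intro conjI)
  have sub: "tree_topology T derived_set_of P \<subseteq> P"
    using closedin_contains_derived_set[THEN iffD1, OF clo] by (rule conjunct1)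
  have "P \<subseteq> tree_topology T derived_set_of P"
  proof
    fix x assume x: "x \<in> P"
    have "\<exists>y. y \<noteq> x \<and> y \<in> P \<and> y \<in> U" if U: "x \<in> U \<and> openin (tree_topology T) U" for U
    proof -
      obtain n where "cyl T (init_seg x n) \<subseteq> U" using openin_tree_topologyD U by blast
      then show ?thesis using dense[OF x, of n] by blast
    qed
    moreover have "x \<in> topspace (tree_topology T)" using x P(1) top by blast
    ultimately show "x \<in> tree_topology T derived_set_of P"
      unfolding in_derived_set_of by blast
  qed
  then have "tree_topology T derived_set_of P = P" by (rule equalityI[OF sub])
  then show ?thesis unfolding perfect_in_def using clo by (intro conjI)
qed

primrec path_node :: "('n \<Rightarrow> bool \<Rightarrow> 'n) \<Rightarrow> 'n \<Rightarrow> (nat \<Rightarrow> bool) \<Rightarrow> nat \<Rightarrow> 'n" where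
  "path_node nx s0 \<alpha> 0 = s0"
| "path_node nx s0 \<alpha> (Suc k) = nx (path_node nx s0 \<alpha> k) (\<alpha> k)"

text \<open>The branches of \<open>T\<close> following a path of the scheme form a perfect set, a copy of
  the Cantor space.\<close>
locale cantor_scheme =
  fixes A :: "'a set" and T :: "'a list set" and S :: "'n set" and s0 :: 'n
    and nx :: "'n \<Rightarrow> bool \<Rightarrow> 'n" and label :: "'n \<Rightarrow> 'a list"
  assumes tree: "pruned_tree A T"
    and s0: "s0 \<in> S"
    and nx_in: "\<And>r b. r \<in> S \<Longrightarrow> nx r b \<in> S"
    and label_in: "\<And>r. r \<in> S \<Longrightarrow> label r \<in> T"
    and label_prefix: "\<And>r b. r \<in> S \<Longrightarrow> prefix (label r) (label (nx r b))"
    and label_parallel: "\<And>r. r \<in> S \<Longrightarrow> label (nx r True) \<parallel> label (nx r False)"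
begin

abbreviation node where "node \<equiv> path_node nx s0"

definition limit_set where
  "limit_set = {x \<in> branches T. \<forall>k. \<exists>\<alpha>. x \<in> cyl T (label (node \<alpha> k))}"

lemma node_in: "node \<alpha> k \<in> S"
  by (induction k) (auto simp: s0 nx_in)

lemma node_cong: "(\<And>j. j < k \<Longrightarrow> \<alpha> j = \<beta> j) \<Longrightarrow> node \<alpha> k = node \<beta> k"
  by (induction k) auto

lemma label_strict_prefix: "r \<in> S \<Longrightarrow> strict_prefix (label r) (label (nx r b))"
  using label_prefix label_parallel
  by (metis (full_types) parallelD1 parallelD2 strict_prefix_def)

lemma label_node_Suc: "prefix (label (node \<alpha> k)) (label (node \<alpha> (Suc k)))"
  using label_prefix[OF node_in] by simp

lemma label_node_mono: "k \<le> m \<Longrightarrow> prefix (label (node \<alpha> k)) (label (node \<alpha> m))"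
proof (induction m)
  case (Suc m)
  then show ?case
    using label_node_Suc[of \<alpha> m] by (auto simp: le_Suc_eq simp del: path_node.simps intro: prefix_order.trans)
qed simp

lemma length_label_node: "k \<le> length (label (node \<alpha> k))"
proof (induction k)
  case (Suc k)
  have "length (label (node \<alpha> k)) < length (label (node \<alpha> (Suc k)))"
    using label_strict_prefix[OF node_in, of \<alpha> k "\<alpha> k"] by (simp add: prefix_length_less)
  with Suc show ?case by simp
qed simp

lemma paths_agree_if_not_parallel:
  "\<not> label (node \<alpha> k) \<parallel> label (node \<beta> k) \<Longrightarrow> j < k \<Longrightarrow> \<alpha> j = \<beta> j"
proof (induction k arbitrary: j)
  case (Suc k)
  have "\<not> label (node \<alpha> k) \<parallel> label (node \<beta> k)"
    using Suc.prems(1) parallel_prefixI label_node_Suc by blast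
  then have agree: "\<And>j. j < k \<Longrightarrow> \<alpha> j = \<beta> j" using Suc.IH by blast
  have "\<alpha> k = \<beta> k"
  proof (rule ccontr)
    assume "\<alpha> k \<noteq> \<beta> k"
    moreover have "node \<alpha> k = node \<beta> k" using agree by (rule node_cong)
    ultimately show False
      using Suc.prems(1) label_parallel[OF node_in, of \<alpha> k] parallel_commute
      by (cases "\<alpha> k"; cases "\<beta> k") auto
  qed
  with agree Suc.prems(2) show ?case by (auto simp: less_Suc_eq)
qed simp

definition branch_point where "branch_point \<alpha> = (\<lambda>i. label (node \<alpha> (Suc i)) ! i)"

lemma init_seg_branch_point: "init_seg (branch_point \<alpha>) (length (label (node \<alpha> k))) = label (node \<alpha> k)"
  unfolding branch_point_def
  by (rule init_seg_diagonal[of "\<lambda>k. label (node \<alpha> k)"]) (rule label_node_Suc, rule length_label_node)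

lemma branch_point_in_branches: "branch_point \<alpha> \<in> branches T"
  unfolding branches_def
proof safe
  fix n
  have "prefix (init_seg (branch_point \<alpha>) n) (init_seg (branch_point \<alpha>) (length (label (node \<alpha> n))))"
    using length_label_node by (intro prefix_init_seg)
  moreover have "init_seg (branch_point \<alpha>) (length (label (node \<alpha> n))) \<in> T"
    unfolding init_seg_branch_point by (rule label_in[OF node_in])
  ultimately show "init_seg (branch_point \<alpha>) n \<in> T"
    using prefix_closed_tree[OF tree] by blast
qed

lemma branch_point_in_cyl: "branch_point \<alpha> \<in> cyl T (label (node \<alpha> k))"
  using branch_point_in_branches init_seg_branch_point by (simp add: in_cyl)

lemma branch_point_in_limit_set: "branch_point \<alpha> \<in> limit_set"
  unfolding limit_set_def using branch_point_in_branches branch_point_in_cyl by blast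

text \<open>Levels of the scheme agree on an initial segment of their paths, so the paths chosen
  level by level for a point of the limit set can be glued into a single path.\<close>
lemma limit_set_path:
  assumes "x \<in> limit_set"
  obtains \<alpha> where "\<And>k. x \<in> cyl T (label (node \<alpha> k))"
proof -
  have "\<forall>k. \<exists>\<alpha>. x \<in> cyl T (label (node \<alpha> k))" using assms unfolding limit_set_def by blast
  then obtain ak where ak: "\<And>k. x \<in> cyl T (label (node (ak k) k))" by (rule choice[THEN exE]) blast
  define \<alpha> where "\<alpha> j = ak (Suc j) j" for j
  have agree: "ak a j = ak b j" if "j < a" "a \<le> b" for a b j
  proof -
    have "\<not> label (node (ak a) a) \<parallel> label (node (ak b) b)"
      using not_parallel_if_cyl[OF ak[of a] ak[of b]] .
    then have "\<not> label (node (ak a) a) \<parallel> label (node (ak b) a)"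
      using parallel_prefixI[OF _ prefix_order.refl label_node_mono[OF that(2)]] by blast
    then show ?thesis using that(1) by (rule paths_agree_if_not_parallel)
  qed
  have "node \<alpha> k = node (ak k) k" for k
    by (rule node_cong) (use agree in \<open>auto simp: \<alpha>_def\<close>)
  with ak show thesis by (intro that[of \<alpha>]) simp
qed

lemma finite_level: "finite (range (\<lambda>\<alpha>. node \<alpha> k))"
proof (induction k)
  case (Suc k)
  have "range (\<lambda>\<alpha>. node \<alpha> (Suc k)) \<subseteq> (\<lambda>(r, b). nx r b) ` (range (\<lambda>\<alpha>. node \<alpha> k) \<times> UNIV)"
    by auto
  moreover have "finite ((\<lambda>(r, b). nx r b) ` (range (\<lambda>\<alpha>. node \<alpha> k) \<times> (UNIV :: bool set)))"
    using Suc.IH by simp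
  ultimately show ?case by (rule finite_subset)
qed simp

lemma limit_set_closed:
  assumes "x \<in> branches T" "x \<notin> limit_set"
  shows "\<exists>n. cyl T (init_seg x n) \<inter> limit_set = {}"
proof -
  obtain k where k: "\<And>\<alpha>. x \<notin> cyl T (label (node \<alpha> k))"
    using assms unfolding limit_set_def by blast
  define m where "m = Max ((\<lambda>\<alpha>. length (label (node \<alpha> k))) ` UNIV)"
  have m: "length (label (node \<alpha> k)) \<le> m" for \<alpha>
  proof -
    have "finite ((\<lambda>\<alpha>. length (label (node \<alpha> k))) ` UNIV)"
      using finite_imageI[OF finite_level, of "\<lambda>r. length (label r)"] by (simp add: image_image)
    then show ?thesis unfolding m_def by (rule Max_ge) simp
  qed
  have "y \<notin> limit_set" if y: "y \<in> cyl T (init_seg x m)" for y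
  proof
    assume "y \<in> limit_set"
    then obtain \<alpha> where a: "y \<in> cyl T (label (node \<alpha> k))" unfolding limit_set_def by blast
    have "init_seg y m = init_seg x m" using y by (simp add: in_cyl)
    then have "init_seg x (length (label (node \<alpha> k))) = init_seg y (length (label (node \<alpha> k)))"
      using m[of \<alpha>] by (auto simp: init_seg_eq_iff)
    also have "\<dots> = label (node \<alpha> k)" using a by (simp add: in_cyl)
    finally show False using k[of \<alpha>] assms(1) by (simp add: in_cyl)
  qed
  then show ?thesis by blast
qed

text \<open>Flipping the \<open>n\<close>-th choice of the path of \<open>x\<close> gives a different point of the limit set
  close to \<open>x\<close>.\<close>
lemma limit_set_dense:
  assumes "x \<in> limit_set"
  shows "\<exists>y\<in>limit_set. y \<noteq> x \<and> y \<in> cyl T (init_seg x n)"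
proof -
  obtain \<alpha> where a: "\<And>k. x \<in> cyl T (label (node \<alpha> k))" using limit_set_path[OF assms] by blast
  define \<beta> where "\<beta> = \<alpha>(n := \<not> \<alpha> n)"
  have "node \<beta> n = node \<alpha> n" by (rule node_cong) (simp add: \<beta>_def)
  then have "branch_point \<beta> \<in> cyl T (label (node \<alpha> n))" using branch_point_in_cyl[of \<beta> n] by simp
  moreover have "cyl T (label (node \<alpha> n)) \<subseteq> cyl T (init_seg x n)"
    using a[of n] length_label_node[of n \<alpha>]
    by (metis cyl_antimono in_cyl prefix_init_seg)
  moreover have "branch_point \<beta> \<noteq> x"
  proof
    assume "branch_point \<beta> = x"
    then have "\<not> label (node \<alpha> (Suc n)) \<parallel> label (node \<beta> (Suc n))"
      using not_parallel_if_cyl[OF a[of "Suc n"]] branch_point_in_cyl[of \<beta> "Suc n"]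
      by simp
    then have "\<alpha> n = \<beta> n" by (rule paths_agree_if_not_parallel) simp
    then show False by (simp add: \<beta>_def)
  qed
  ultimately show ?thesis using branch_point_in_limit_set[of \<beta>] by blast
qed

lemma perfect_limit_set: "perfect_in (tree_topology T) limit_set" "limit_set \<noteq> {}"
proof -
  show "limit_set \<noteq> {}" using branch_point_in_limit_set by blast
  then show "perfect_in (tree_topology T) limit_set"
    by (intro perfect_in_tree_topologyI limit_set_closed limit_set_dense)
      (auto simp: limit_set_def)
qed

end

lemma perfect_set_of_splitting:
  assumes tree: "pruned_tree A T" and "s0 \<in> S" and "\<And>r. r \<in> S \<Longrightarrow> label r \<in> T"
    and split: "\<And>r. r \<in> S \<Longrightarrow> \<exists>r1 r2. r1 \<in> S \<and> r2 \<in> S \<and> R r r1 \<and> R r r2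
      \<and> prefix (label r) (label r1) \<and> prefix (label r) (label r2) \<and> label r1 \<parallel> label r2"
  obtains P where "P \<noteq> {}" "perfect_in (tree_topology T) P"
    and "\<And>x. x \<in> P \<Longrightarrow> \<exists>c. \<forall>k. c k \<in> S \<and> R (c k) (c (Suc k))
      \<and> k \<le> length (label (c k)) \<and> x \<in> cyl T (label (c k))"
proof -
  have "\<forall>r\<in>S. \<exists>r1 r2. r1 \<in> S \<and> r2 \<in> S \<and> R r r1 \<and> R r r2
      \<and> prefix (label r) (label r1) \<and> prefix (label r) (label r2) \<and> label r1 \<parallel> label r2"
    using split by blast
  then obtain f1 where "\<forall>r\<in>S. \<exists>r2. f1 r \<in> S \<and> r2 \<in> S \<and> R r (f1 r) \<and> R r r2
      \<and> prefix (label r) (label (f1 r)) \<and> prefix (label r) (label r2) \<and> label (f1 r) \<parallel> label r2"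
    by (rule bchoice[THEN exE])
  then obtain f2 where f: "\<forall>r\<in>S. f1 r \<in> S \<and> f2 r \<in> S \<and> R r (f1 r) \<and> R r (f2 r)
      \<and> prefix (label r) (label (f1 r)) \<and> prefix (label r) (label (f2 r)) \<and> label (f1 r) \<parallel> label (f2 r)"
    by (rule bchoice[THEN exE])
  define nx where "nx r b = (if b then f1 r else f2 r)" for r b
  interpret cantor_scheme A T S s0 nx label
  proof
    fix r b assume "r \<in> S"
    then show "nx r b \<in> S" "prefix (label r) (label (nx r b))" "label (nx r True) \<parallel> label (nx r False)"
      using f by (simp_all add: nx_def)
  qed (use assms in auto)
  show thesis
  proof (rule that[OF perfect_limit_set(2,1)])
    fix x assume "x \<in> limit_set"
    then obtain \<alpha> where "\<And>k. x \<in> cyl T (label (node \<alpha> k))" using limit_set_path by blast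
    moreover have "R (node \<alpha> k) (node \<alpha> (Suc k))" for k
      using f node_in[of \<alpha> k] by (cases "\<alpha> k") (simp_all add: nx_def)
    ultimately show "\<exists>c. \<forall>k. c k \<in> S \<and> R (c k) (c (Suc k)) \<and> k \<le> length (label (c k))
        \<and> x \<in> cyl T (label (c k))"
      using node_in length_label_node by blast
  qed
qed

definition thin_part :: "'a list set \<Rightarrow> (nat \<Rightarrow> 'a) set" where
  "thin_part T = \<Union> (cyl T ` {q \<in> T. countable (cyl T q)})"

definition thick_node :: "'a list set \<Rightarrow> 'a list \<Rightarrow> bool" where
  "thick_node T r \<longleftrightarrow> r \<in> T \<and> uncountable (cyl T r)"

lemma countable_tree: "pruned_tree A T \<Longrightarrow> countable A \<Longrightarrow> countable T"
  unfolding pruned_tree_def by (meson countable_lists countable_subset)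

lemma countable_thin_part: "countable T \<Longrightarrow> countable (thin_part T)"
  unfolding thin_part_def by (intro countable_UN) auto

lemma thick_node_Nil: "uncountable (branches T) \<Longrightarrow> thick_node T []"
  using branches_Nil infinite_imp_nonempty[OF uncountable_infinite]
  unfolding thick_node_def cyl_Nil by blast

lemma thick_node_init_seg:
  assumes "x \<in> branches T" "x \<notin> thin_part T"
  shows "thick_node T (init_seg x n)"
proof -
  have "init_seg x n \<in> T" "x \<in> cyl T (init_seg x n)"
    using assms(1) by (simp_all add: branches_def cyl_init_seg)
  with assms(2) show ?thesis unfolding thick_node_def thin_part_def by blast
qed

lemma uncountable_cyl_Diff_thin_part:
  "countable T \<Longrightarrow> thick_node T r \<Longrightarrow> uncountable (cyl T r - thin_part T)"
  by (intro uncountable_minus_countable countable_thin_part) (simp_all add: thick_node_def)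

text \<open>Two distinct points outside the countable thin part yield incomparable thick extensions.\<close>
lemma thick_node_split:
  assumes "countable T" "thick_node T r"
  obtains q1 q2 where "thick_node T q1" "thick_node T q2" "prefix r q1" "prefix r q2" "q1 \<parallel> q2"
proof -
  have u: "uncountable (cyl T r - thin_part T)"
    using assms by (rule uncountable_cyl_Diff_thin_part)
  then obtain x where x: "x \<in> cyl T r - thin_part T"
    using infinite_imp_nonempty[OF uncountable_infinite] by blast
  have "uncountable (cyl T r - thin_part T - {x})" using u by simp
  then obtain y where y: "y \<in> cyl T r - thin_part T" "y \<noteq> x"
    using infinite_imp_nonempty[OF uncountable_infinite] by blast
  then obtain i where i: "x i \<noteq> y i" by (metis fun_eq_iff)
  define n where "n = max (Suc i) (length r)"
  have ne: "init_seg x n \<noteq> init_seg y n" using i by (auto simp: init_seg_eq_iff n_def intro!: exI[of _ i])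
  have "thick_node T (init_seg x n)" "thick_node T (init_seg y n)"
    using x y by (auto simp: in_cyl intro: thick_node_init_seg)
  moreover have "prefix r (init_seg x n)" "prefix r (init_seg y n)"
    using x y by (auto simp: in_cyl prefix_init_seg_iff n_def)
  moreover have "init_seg x n \<parallel> init_seg y n"
    using ne by (intro not_equal_is_parallel) simp_all
  ultimately show thesis by (rule that)
qed

lemma perfect_cyl_Diff_thin_part:
  assumes cT: "countable T" and r: "thick_node T r"
  shows "perfect_in (tree_topology T) (cyl T r - thin_part T)"
proof (rule perfect_in_tree_topologyI)
  show "cyl T r - thin_part T \<subseteq> branches T" using cyl_subset_branches by blast
  show "cyl T r - thin_part T \<noteq> {}"
    using uncountable_cyl_Diff_thin_part[OF assms] infinite_imp_nonempty[OF uncountable_infinite] by blast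
next
  fix x assume x: "x \<in> branches T" "x \<notin> cyl T r - thin_part T"
  show "\<exists>n. cyl T (init_seg x n) \<inter> (cyl T r - thin_part T) = {}"
  proof (cases "x \<in> cyl T r")
    case False
    then have "cyl T (init_seg x (length r)) \<inter> cyl T r = {}"
      using x(1) by (auto simp: in_cyl)
    then show ?thesis by blast
  next
    case True
    then obtain q where q: "q \<in> T" "countable (cyl T q)" "x \<in> cyl T q"
      using x by (auto simp: thin_part_def)
    then have "cyl T (init_seg x (length q)) \<subseteq> thin_part T"
      by (auto simp: thin_part_def in_cyl)
    then show ?thesis by blast
  qed
next
  fix x n assume x: "x \<in> cyl T r - thin_part T"
  define m where "m = max n (length r)"
  have "thick_node T (init_seg x m)"
    using x by (auto simp: in_cyl intro: thick_node_init_seg)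
  then have "uncountable (cyl T (init_seg x m) - thin_part T - {x})"
    using uncountable_cyl_Diff_thin_part[OF cT] by simp
  then obtain y where y: "y \<in> cyl T (init_seg x m)" "y \<notin> thin_part T" "y \<noteq> x"
    using infinite_imp_nonempty[OF uncountable_infinite] by blast
  have "prefix r (init_seg x m)" using x by (simp add: in_cyl prefix_init_seg_iff m_def)
  then have "y \<in> cyl T r" using y(1) cyl_antimono by blast
  moreover have "y \<in> cyl T (init_seg x n)" using y(1) cyl_init_seg_antimono[of n m T x] by (auto simp: m_def)
  ultimately show "\<exists>y\<in>cyl T r - thin_part T. y \<noteq> x \<and> y \<in> cyl T (init_seg x n)" using y(2,3) by blast
qed

lemma perfect_in_tree_subset_branches: "perfect_in (tree_topology T) P \<Longrightarrow> P \<subseteq> branches T"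
  using closedin_subset[of "tree_topology T" P] cyl_subset_branches
  unfolding perfect_in_def tree_topology_def topology_generated_by_topspace by blast

lemma bernstein_in_treeD:
  assumes "bernstein_in (tree_topology T) B" "P \<noteq> {}" "perfect_in (tree_topology T) P"
  shows "\<not> P \<subseteq> B" "\<not> P \<subseteq> branches T - B"
proof -
  have "topspace (tree_topology T) = branches T"
    using perfect_in_tree_subset_branches[OF assms(3)] assms(2) by (intro topspace_tree_topology) blast
  with assms show "\<not> P \<subseteq> B" "\<not> P \<subseteq> branches T - B"
    unfolding bernstein_in_def by auto
qed

lemma limsup_ge_if_frequently:
  fixes v :: "nat \<Rightarrow> 'b :: complete_linorder"
  assumes "\<exists>\<^sub>F n in sequentially. c \<le> v n"
  shows "c \<le> limsup v"
proof (rule ccontr)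
  assume "\<not> c \<le> limsup v"
  then have "\<forall>\<^sub>F n in sequentially. v n < c" by (intro Limsup_lessD) simp
  then have "\<forall>\<^sub>F n in sequentially. \<not> c \<le> v n" by (rule eventually_mono) (simp add: not_le)
  with assms show False by (simp add: frequently_def)
qed

definition often_above :: "'a list set \<Rightarrow> ((nat \<Rightarrow> 'a) \<Rightarrow> nat \<Rightarrow> real) \<Rightarrow> real \<Rightarrow> 'a list \<Rightarrow> bool"
  where "often_above T V c s \<longleftrightarrow> (\<forall>r n. thick_node T r \<longrightarrow> prefix s r \<longrightarrow>
    (\<exists>r'. thick_node T r' \<and> prefix r r' \<and> (\<exists>t\<ge>n. \<forall>x\<in>cyl T r'. c < V x t)))"

lemma often_above_split:
  assumes cT: "countable T" and above: "often_above T V c s" and r: "thick_node T r" "prefix s r"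
  obtains r1 r2 where "thick_node T r1" "thick_node T r2" "prefix r r1" "prefix r r2" "r1 \<parallel> r2"
    and "\<exists>t\<ge>n. \<forall>x\<in>cyl T r1. c < V x t" and "\<exists>t\<ge>n. \<forall>x\<in>cyl T r2. c < V x t"
proof -
  obtain q1 q2 where q: "thick_node T q1" "thick_node T q2" "prefix r q1" "prefix r q2" "q1 \<parallel> q2"
    using thick_node_split[OF cT r(1)] by blast
  have "prefix s q1" "prefix s q2"
    using q(3,4) r(2) prefix_order.trans by blast+
  obtain r1 where "thick_node T r1" "prefix q1 r1" "\<exists>t\<ge>n. \<forall>x\<in>cyl T r1. c < V x t"
    using above q(1) \<open>prefix s q1\<close> unfolding often_above_def by blast
  moreover obtain r2 where "thick_node T r2" "prefix q2 r2" "\<exists>t\<ge>n. \<forall>x\<in>cyl T r2. c < V x t"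
    using above q(2) \<open>prefix s q2\<close> unfolding often_above_def by blast
  moreover have "prefix r r1" "prefix r r2"
    using q(3,4) \<open>prefix q1 r1\<close> \<open>prefix q2 r2\<close> prefix_order.trans by blast+
  moreover have "r1 \<parallel> r2" using q(5) \<open>prefix q1 r1\<close> \<open>prefix q2 r2\<close> by (rule parallel_prefixI)
  ultimately show thesis using that by blast
qed

lemma perfect_set_frequently_above:
  assumes cT: "countable T" and tree: "pruned_tree A T" and s: "thick_node T s"
    and above: "often_above T V c s"
  obtains P where "P \<noteq> {}" "perfect_in (tree_topology T) P"
    and "\<And>x. x \<in> P \<Longrightarrow> ereal c \<le> limsup (\<lambda>t. ereal (V x t))"
proof -
  define S where "S = {r. thick_node T r \<and> prefix s r}"
  define R where "R r r' \<longleftrightarrow> (\<exists>t\<ge>length r. \<forall>x\<in>cyl T r'. c < V x t)" for r r' :: "'a list"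
  have split: "\<exists>r1 r2. r1 \<in> S \<and> r2 \<in> S \<and> R r r1 \<and> R r r2
      \<and> prefix (id r) (id r1) \<and> prefix (id r) (id r2) \<and> id r1 \<parallel> id r2" if r: "r \<in> S" for r
  proof -
    have "thick_node T r" "prefix s r" using r by (simp_all add: S_def)
    then obtain r1 r2 where "thick_node T r1" "thick_node T r2" "prefix r r1" "prefix r r2" "r1 \<parallel> r2"
      "R r r1" "R r r2"
      unfolding R_def using often_above_split[OF cT above, where n = "length r"] by blast
    with \<open>prefix s r\<close> show ?thesis
      unfolding S_def by (intro exI[of _ r1] exI[of _ r2]) (auto dest: prefix_order.trans)
  qed
  obtain P where P: "P \<noteq> {}" "perfect_in (tree_topology T) P"
    and path: "\<And>x. x \<in> P \<Longrightarrow> \<exists>d. \<forall>k. d k \<in> S \<and> R (d k) (d (Suc k))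
      \<and> k \<le> length (id (d k)) \<and> x \<in> cyl T (id (d k))"
    using perfect_set_of_splitting[OF tree, of s S id R] split s
    unfolding S_def thick_node_def by auto
  show thesis
  proof (rule that[OF P])
    fix x assume "x \<in> P"
    then obtain d where d: "\<forall>k. d k \<in> S \<and> R (d k) (d (Suc k)) \<and> k \<le> length (id (d k))
        \<and> x \<in> cyl T (id (d k))"
      using path by blast
    have "\<exists>t\<ge>N. ereal c \<le> ereal (V x t)" for N
    proof -
      have "R (d N) (d (Suc N))" "N \<le> length (d N)" "x \<in> cyl T (d (Suc N))"
        using d by simp_all
      then obtain t where "length (d N) \<le> t" "c < V x t"
        unfolding R_def by blast
      with \<open>N \<le> length (d N)\<close> show ?thesis by (intro exI[of _ t]) auto
    qed
    then show "ereal c \<le> limsup (\<lambda>t. ereal (V x t))"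
      by (intro limsup_ge_if_frequently) (simp add: frequently_sequentially)
  qed
qed

lemma perfect_set_eventually_below:
  assumes cT: "countable T"
    and local: "\<And>x y t. init_seg x (Suc t) = init_seg y (Suc t) \<Longrightarrow> V x t = V y t"
    and not_above: "\<not> often_above T V c s"
  obtains P where "P \<noteq> {}" "perfect_in (tree_topology T) P"
    and "\<And>x. x \<in> P \<Longrightarrow> limsup (\<lambda>t. ereal (V x t)) \<le> ereal c"
proof -
  obtain r n where r: "thick_node T r"
    and below: "\<forall>r'. prefix r r' \<longrightarrow> thick_node T r' \<longrightarrow> (\<forall>t\<ge>n. \<exists>x\<in>cyl T r'. V x t \<le> c)"
    using not_above unfolding often_above_def by (auto simp: not_less)
  show thesis
  proof (rule that[of "cyl T r - thin_part T"])
    show "cyl T r - thin_part T \<noteq> {}"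
      using uncountable_cyl_Diff_thin_part[OF cT r] infinite_imp_nonempty[OF uncountable_infinite] by blast
    show "perfect_in (tree_topology T) (cyl T r - thin_part T)"
      using cT r by (rule perfect_cyl_Diff_thin_part)
  next
    fix x assume x: "x \<in> cyl T r - thin_part T"
    have "V x t \<le> c" if t: "max n (length r) \<le> t" for t
    proof -
      have "thick_node T (init_seg x (Suc t))"
        using x by (auto simp: in_cyl intro: thick_node_init_seg)
      moreover have "prefix r (init_seg x (Suc t))"
        using x t by (simp add: in_cyl prefix_init_seg_iff)
      ultimately obtain y where "y \<in> cyl T (init_seg x (Suc t))" "V y t \<le> c"
        using below t by auto
      then show ?thesis using local[of y t x] by (simp add: in_cyl)
    qed
    then show "limsup (\<lambda>t. ereal (V x t)) \<le> ereal c"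
      by (intro Limsup_bounded) (auto simp: eventually_sequentially intro!: exI[of _ "max n (length r)"])
  qed
qed

text \<open>Either \<open>V\<close> exceeds \<open>1/2\<close> infinitely often along a perfect set, or it stays below \<open>1/2\<close>
  eventually on a perfect set; in neither case can its limsup be the indicator of a Bernstein set.\<close>
lemma bernstein_not_local_limsup:
  fixes V :: "(nat \<Rightarrow> 'a) \<Rightarrow> nat \<Rightarrow> real"
  assumes cT: "countable T" and tree: "pruned_tree A T" and unc: "uncountable (branches T)"
    and bern: "bernstein_in (tree_topology T) B"
    and local: "\<And>x y t. init_seg x (Suc t) = init_seg y (Suc t) \<Longrightarrow> V x t = V y t"
    and limsup: "\<And>x. x \<in> branches T \<Longrightarrow> ereal (indicator B x) = limsup (\<lambda>t. ereal (V x t))"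
  shows False
proof (cases "often_above T V (1/2) []")
  case True
  then obtain P where P: "P \<noteq> {}" "perfect_in (tree_topology T) P"
    and high: "\<And>x. x \<in> P \<Longrightarrow> ereal (1/2) \<le> limsup (\<lambda>t. ereal (V x t))"
    using perfect_set_frequently_above[OF cT tree thick_node_Nil[OF unc] True] by blast
  have "P \<subseteq> B"
  proof
    fix x assume x: "x \<in> P"
    then have "x \<in> branches T" using perfect_in_tree_subset_branches[OF P(2)] by blast
    then have "ereal (1/2) \<le> ereal (indicator B x)" using high[OF x] by (simp only: limsup)
    then show "x \<in> B" by (cases "x \<in> B") auto
  qed
  then show False using bernstein_in_treeD(1)[OF bern P] by blast
next
  case False
  obtain P where P: "P \<noteq> {}" "perfect_in (tree_topology T) P"
    and low: "\<And>x. x \<in> P \<Longrightarrow> limsup (\<lambda>t. ereal (V x t)) \<le> ereal (1/2)"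
  proof (rule perfect_set_eventually_below[OF cT _ False])
    show "V x t = V y t" if "init_seg x (Suc t) = init_seg y (Suc t)" for x y t
      using that by (rule local)
  qed (rule that)
  have "P \<subseteq> branches T - B"
  proof
    fix x assume x: "x \<in> P"
    then have xb: "x \<in> branches T" using perfect_in_tree_subset_branches[OF P(2)] by blast
    then have "ereal (indicator B x) \<le> ereal (1/2)" using low[OF x] by (simp only: limsup)
    with xb show "x \<in> branches T - B" by (cases "x \<in> B") auto
  qed
  then show False using bernstein_in_treeD(2)[OF bern P] by blast
qed

primrec II_moves :: "('a list \<Rightarrow> real list \<Rightarrow> real) \<Rightarrow> (nat \<Rightarrow> 'a) \<Rightarrow> nat \<Rightarrow> real list" where
  "II_moves \<tau> x 0 = []"
| "II_moves \<tau> x (Suc n) = II_moves \<tau> x n @ [\<tau> (init_seg x (Suc n)) (II_moves \<tau> x n)]"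

definition II_play :: "('a list \<Rightarrow> real list \<Rightarrow> real) \<Rightarrow> (nat \<Rightarrow> 'a) \<Rightarrow> nat \<Rightarrow> real" where
  "II_play \<tau> x t = \<tau> (init_seg x (Suc t)) (II_moves \<tau> x t)"

lemma init_seg_II_play: "init_seg (II_play \<tau> x) n = II_moves \<tau> x n"
  by (induction n) (simp_all add: init_seg_Suc II_play_def)

lemma II_moves_local: "init_seg x n = init_seg y n \<Longrightarrow> II_moves \<tau> x n = II_moves \<tau> y n"
proof (induction n)
  case (Suc n)
  then have "init_seg x n = init_seg y n" by (simp add: init_seg_eq_iff)
  with Suc show ?case by simp
qed simp

lemma II_play_local:
  assumes "init_seg x (Suc t) = init_seg y (Suc t)"
  shows "II_play \<tau> x t = II_play \<tau> y t"
proof -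
  have "init_seg x t = init_seg y t" using assms by (simp add: init_seg_eq_iff)
  then have "II_moves \<tau> x t = II_moves \<tau> y t" by (rule II_moves_local)
  with assms show ?thesis by (simp add: II_play_def)
qed

lemma II_winning_limsup:
  assumes "II_winning T f \<tau>" "x \<in> branches T"
  shows "ereal (f x) = limsup (\<lambda>t. ereal (II_play \<tau> x t))"
proof -
  have "\<forall>t. init_seg x (Suc t) \<in> T" using assms(2) by (simp add: branches_def)
  moreover have "\<forall>t. II_play \<tau> x t = \<tau> (init_seg x (Suc t)) (init_seg (II_play \<tau> x) t)"
    by (simp add: II_play_def init_seg_II_play)
  ultimately show ?thesis using assms(1) unfolding II_winning_def by blast
qed

theorem not_II_winning:
  assumes "countable A" "pruned_tree A T" "uncountable (branches T)"
    and "bernstein_in (tree_topology T) B"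
  shows "\<not> II_winning T (indicator B) \<tau>"
proof
  assume win: "II_winning T (indicator B) \<tau>"
  show False
  proof (rule bernstein_not_local_limsup[OF countable_tree[OF assms(2,1)] assms(2-4)])
    show "II_play \<tau> x t = II_play \<tau> y t" if "init_seg x (Suc t) = init_seg y (Suc t)" for x y t
      using that by (rule II_play_local)
    show "ereal (indicator B x) = limsup (\<lambda>t. ereal (II_play \<tau> x t))" if "x \<in> branches T" for x
      using win that by (rule II_winning_limsup)
  qed
qed

primrec I_moves :: "('a list \<Rightarrow> real list \<Rightarrow> 'a) \<Rightarrow> (nat \<Rightarrow> real) \<Rightarrow> nat \<Rightarrow> 'a list" where
  "I_moves \<sigma> v 0 = []"
| "I_moves \<sigma> v (Suc n) = I_moves \<sigma> v n @ [\<sigma> (I_moves \<sigma> v n) (init_seg v n)]"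

definition I_play :: "('a list \<Rightarrow> real list \<Rightarrow> 'a) \<Rightarrow> (nat \<Rightarrow> real) \<Rightarrow> nat \<Rightarrow> 'a" where
  "I_play \<sigma> v t = \<sigma> (I_moves \<sigma> v t) (init_seg v t)"

text \<open>Only the first \<open>length u\<close> values of \<open>nth u\<close> are consulted, so out-of-range indices do no harm.\<close>
definition I_response :: "('a list \<Rightarrow> real list \<Rightarrow> 'a) \<Rightarrow> real list \<Rightarrow> 'a list" where
  "I_response \<sigma> u = I_moves \<sigma> (nth u) (length u)"

lemma init_seg_I_play: "init_seg (I_play \<sigma> v) n = I_moves \<sigma> v n"
  by (induction n) (simp_all add: init_seg_Suc I_play_def)

lemma length_I_moves [simp]: "length (I_moves \<sigma> v n) = n"
  by (induction n) simp_all

lemma I_moves_local: "init_seg v n = init_seg w n \<Longrightarrow> I_moves \<sigma> v n = I_moves \<sigma> w n"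
proof (induction n)
  case (Suc n)
  then have "init_seg v n = init_seg w n" by (simp add: init_seg_eq_iff)
  with Suc show ?case by simp
qed simp

lemma I_response_eq: "init_seg v (length u) = u \<Longrightarrow> I_response \<sigma> u = I_moves \<sigma> v (length u)"
  unfolding I_response_def by (rule I_moves_local) (simp add: init_seg_nth)

lemma length_I_response [simp]: "length (I_response \<sigma> u) = length u"
  by (simp add: I_response_def)

lemma prefix_I_response:
  assumes "prefix u w"
  shows "prefix (I_response \<sigma> u) (I_response \<sigma> w)"
proof -
  have "init_seg (nth w) (length u) = u"
    using assms init_seg_nth[of w] by (metis prefix_init_seg_iff)
  then have "I_response \<sigma> u = init_seg (I_play \<sigma> (nth w)) (length u)"
    by (simp add: I_response_eq init_seg_I_play)
  moreover have "I_response \<sigma> w = init_seg (I_play \<sigma> (nth w)) (length w)"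
    by (simp add: I_response_def init_seg_I_play)
  ultimately show ?thesis using assms by (simp add: prefix_init_seg prefix_length_le)
qed

lemma I_winningD:
  assumes "I_winning T f \<sigma>"
  shows "init_seg (I_play \<sigma> v) (Suc t) \<in> T" and "ereal (f (I_play \<sigma> v)) \<noteq> limsup (\<lambda>t. ereal (v t))"
proof -
  have "\<forall>t. I_play \<sigma> v t = \<sigma> (init_seg (I_play \<sigma> v) t) (init_seg v t)"
    by (simp add: I_play_def init_seg_I_play)
  then show "init_seg (I_play \<sigma> v) (Suc t) \<in> T" "ereal (f (I_play \<sigma> v)) \<noteq> limsup (\<lambda>t. ereal (v t))"
    using assms unfolding I_winning_def by blast+
qed

lemma limsup_eventually_const:
  fixes v :: "nat \<Rightarrow> real"
  assumes "\<And>n. N \<le> n \<Longrightarrow> v n = c"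
  shows "limsup (\<lambda>t. ereal (v t)) = ereal c"
proof -
  have "limsup (\<lambda>t. ereal (v t)) = limsup (\<lambda>t. ereal c)"
    using assms by (intro Limsup_eq) (auto simp: eventually_sequentially)
  then show ?thesis by (simp add: Limsup_const)
qed

text \<open>If all \<open>0/1\<close>-extensions of \<open>u\<close> had comparable responses, Player I would answer
  \<open>u 0 0 0 \<dots>\<close> and \<open>u 1 1 1 \<dots>\<close> with the same run, whose value would have to differ both from
  the limsup \<open>0\<close> and from the limsup \<open>1\<close>.\<close>
lemma I_response_splits:
  assumes win: "I_winning T (indicator B) \<sigma>" and u: "set u \<subseteq> {0, 1}"
  shows "\<exists>w1 w2. set w1 \<subseteq> {0, 1} \<and> set w2 \<subseteq> {0, 1} \<and> prefix u w1 \<and> prefix u w2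
    \<and> I_response \<sigma> w1 \<parallel> I_response \<sigma> w2"
proof (rule ccontr)
  assume no_split: "\<not> ?thesis"
  define pad where "pad c i = (if i < length u then u ! i else c)" for c :: real and i
  have pad_01: "pad c i \<in> {0, 1}" if "c \<in> {0, 1}" for c i
  proof (cases "i < length u")
    case True
    have "u ! i \<in> {0, 1}" using u nth_mem[OF True] by blast
    with True show ?thesis by (simp add: pad_def)
  qed (use that in \<open>simp add: pad_def\<close>)
  have pad_u: "init_seg (pad c) (length u) = u" for c
    by (intro nth_equalityI) (simp_all add: pad_def)
  have "init_seg (I_play \<sigma> (pad 0)) n = init_seg (I_play \<sigma> (pad 1)) n" if "length u \<le> n" for n
  proof -
    have "set (init_seg (pad c) n) \<subseteq> {0, 1}" if "c \<in> {0, 1}" for c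
      using pad_01[OF that] by (auto simp: init_seg_def)
    moreover have "prefix u (init_seg (pad c) n)" for c
      using pad_u \<open>length u \<le> n\<close> by (simp add: prefix_init_seg_iff)
    ultimately have "\<not> I_response \<sigma> (init_seg (pad 0) n) \<parallel> I_response \<sigma> (init_seg (pad 1) n)"
      using no_split by blast
    then have "I_response \<sigma> (init_seg (pad 0) n) = I_response \<sigma> (init_seg (pad 1) n)"
      using not_equal_is_parallel by fastforce
    then show ?thesis by (simp add: I_response_eq init_seg_I_play)
  qed
  then have same_run: "I_play \<sigma> (pad 0) = I_play \<sigma> (pad 1)"
    by (intro eq_if_init_seg_eq_unbounded[of _ "\<lambda>k. k + length u"]) simp_all
  have "limsup (\<lambda>t. ereal (pad c t)) = ereal c" for c
    by (rule limsup_eventually_const[of "length u"]) (simp add: pad_def)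
  then have "indicator B (I_play \<sigma> (pad 0)) \<noteq> (0::real)" "indicator B (I_play \<sigma> (pad 1)) \<noteq> (1::real)"
    using I_winningD(2)[OF win, of "pad 0"] I_winningD(2)[OF win, of "pad 1"] by auto
  with same_run show False by (simp add: indicator_def split: if_splits)
qed

lemma limsup_diagonal_eq_1:
  fixes c :: "nat \<Rightarrow> real list"
  assumes c01: "\<And>k. set (c k) \<subseteq> {0, 1}"
    and step: "\<And>k. \<exists>v. prefix (c k) v \<and> c (Suc k) = v @ [1]" and len: "\<And>k. k \<le> length (c k)"
  shows "limsup (\<lambda>i. ereal (c (Suc i) ! i)) = 1"
proof (rule antisym)
  define y where "y i = c (Suc i) ! i" for i
  have diag01: "c (Suc i) ! i \<in> {0, 1}" for i
  proof -
    have "i < length (c (Suc i))" using len[of "Suc i"] by simp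
    then show ?thesis using c01[of "Suc i"] nth_mem by blast
  qed
  have "c (Suc i) ! i \<le> 1" for i using diag01[of i] by auto
  then show "limsup (\<lambda>i. ereal (c (Suc i) ! i)) \<le> 1"
    by (intro Limsup_bounded) simp
  have "prefix (c k) (c (Suc k))" for k
    using step[of k] by (auto simp: prefix_prefix)
  then have y_c: "init_seg y (length (c k)) = c k" for k
    unfolding y_def using len by (rule init_seg_diagonal)
  have "\<exists>n\<ge>N. 1 \<le> ereal (y n)" for N
  proof -
    obtain v where v: "prefix (c N) v" "c (Suc N) = v @ [1]" using step by blast
    have "N \<le> length v" using len[of N] prefix_length_le[OF v(1)] by simp
    moreover have "y (length v) = 1"
      using y_c[of "Suc N"] v(2) nth_init_seg[of "length v" "Suc (length v)" y] by simp
    ultimately show ?thesis by (intro exI[of _ "length v"]) simp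
  qed
  then show "1 \<le> limsup (\<lambda>i. ereal (c (Suc i) ! i))"
    unfolding y_def by (intro limsup_ge_if_frequently) (simp add: frequently_sequentially)
qed

lemma I_response_in_tree:
  assumes "pruned_tree A T" and "\<And>v t. init_seg (I_play \<sigma> v) (Suc t) \<in> T"
  shows "I_response \<sigma> u \<in> T"
proof -
  have "I_response \<sigma> u = init_seg (I_play \<sigma> (nth u)) (length u)"
    by (simp add: I_response_def init_seg_I_play)
  then show ?thesis
    using prefix_closed_tree[OF assms prefix_init_seg[of "length u" "Suc (length u)"]] by simp
qed

lemma eq_I_play_diagonal:
  assumes "\<And>k. prefix (c k) (c (Suc k))" and len: "\<And>k. k \<le> length (c k)"
    and x: "\<And>k. x \<in> cyl T (I_response \<sigma> (c k))"
  shows "x = I_play \<sigma> (\<lambda>i. c (Suc i) ! i)"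
proof (rule eq_if_init_seg_eq_unbounded[of _ "\<lambda>k. length (c k)"])
  fix k
  have "init_seg (\<lambda>i. c (Suc i) ! i) (length (c k)) = c k"
    using assms(1) len by (rule init_seg_diagonal)
  then show "init_seg x (length (c k)) = init_seg (I_play \<sigma> (\<lambda>i. c (Suc i) ! i)) (length (c k))"
    using x[of k] I_response_eq[of _ "c k" \<sigma>] by (simp add: in_cyl init_seg_I_play)
qed (rule len)

text \<open>Appending a \<open>1\<close> at every splitting step makes II's moves along each path have limsup \<open>1\<close>.\<close>
lemma perfect_set_of_I_plays:
  assumes tree: "pruned_tree A T"
    and legal: "\<And>v t. init_seg (I_play \<sigma> v) (Suc t) \<in> T"
    and split: "\<And>u. set u \<subseteq> {0, 1} \<Longrightarrow> \<exists>w1 w2. set w1 \<subseteq> {0, 1} \<and> set w2 \<subseteq> {0, 1}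
      \<and> prefix u w1 \<and> prefix u w2 \<and> I_response \<sigma> w1 \<parallel> I_response \<sigma> w2"
  obtains P where "P \<noteq> {}" "perfect_in (tree_topology T) P"
    and "\<And>x. x \<in> P \<Longrightarrow> \<exists>y. x = I_play \<sigma> y \<and> limsup (\<lambda>t. ereal (y t)) = 1"
proof -
  define S where "S = {u :: real list. set u \<subseteq> {0, 1}}"
  define R where "R u w \<longleftrightarrow> (\<exists>v. prefix u v \<and> w = v @ [1])" for u w :: "real list"
  have splitting: "\<exists>r1 r2. r1 \<in> S \<and> r2 \<in> S \<and> R u r1 \<and> R u r2 \<and> prefix (I_response \<sigma> u) (I_response \<sigma> r1)
      \<and> prefix (I_response \<sigma> u) (I_response \<sigma> r2) \<and> I_response \<sigma> r1 \<parallel> I_response \<sigma> r2"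
    if u: "u \<in> S" for u
  proof -
    obtain w1 w2 where w: "set w1 \<subseteq> {0, 1}" "set w2 \<subseteq> {0, 1}" "prefix u w1" "prefix u w2"
      "I_response \<sigma> w1 \<parallel> I_response \<sigma> w2"
      using split u unfolding S_def by blast
    have "prefix u (w1 @ [1])" "prefix u (w2 @ [1])"
      using w(3,4) by (simp_all add: prefix_prefix)
    moreover have "I_response \<sigma> (w1 @ [1]) \<parallel> I_response \<sigma> (w2 @ [1])"
      using w(5) by (rule parallel_prefixI) (simp_all add: prefix_I_response)
    ultimately show ?thesis
      using w unfolding S_def R_def by (intro exI conjI) (auto intro: prefix_I_response)
  qed
  obtain P where P: "P \<noteq> {}" "perfect_in (tree_topology T) P"
    and path: "\<And>x. x \<in> P \<Longrightarrow> \<exists>c. \<forall>k. c k \<in> S \<and> R (c k) (c (Suc k))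
      \<and> k \<le> length (I_response \<sigma> (c k)) \<and> x \<in> cyl T (I_response \<sigma> (c k))"
  proof (rule perfect_set_of_splitting[where label = "I_response \<sigma>" and R = R,
        OF tree _ I_response_in_tree[OF tree legal]])
    show "[] \<in> S" by (simp add: S_def)
  qed (use splitting in blast, rule that)
  show thesis
  proof (rule that[OF P])
    fix x assume "x \<in> P"
    then obtain c where c: "\<And>k. c k \<in> S \<and> R (c k) (c (Suc k)) \<and> k \<le> length (c k)
        \<and> x \<in> cyl T (I_response \<sigma> (c k))"
      using path by auto
    have "prefix (c k) (c (Suc k))" for k
      using c[of k] unfolding R_def by (auto simp: prefix_prefix)
    then have "x = I_play \<sigma> (\<lambda>i. c (Suc i) ! i)"
      using c by (intro eq_I_play_diagonal) auto
    moreover have "limsup (\<lambda>i. ereal (c (Suc i) ! i)) = 1"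
      using c by (intro limsup_diagonal_eq_1) (auto simp: S_def R_def)
    ultimately show "\<exists>y. x = I_play \<sigma> y \<and> limsup (\<lambda>t. ereal (y t)) = 1" by blast
  qed
qed

theorem not_I_winning:
  assumes tree: "pruned_tree A T" and bern: "bernstein_in (tree_topology T) B"
  shows "\<not> I_winning T (indicator B) \<sigma>"
proof
  assume win: "I_winning T (indicator B) \<sigma>"
  obtain P where P: "P \<noteq> {}" "perfect_in (tree_topology T) P"
    and plays: "\<And>x. x \<in> P \<Longrightarrow> \<exists>y. x = I_play \<sigma> y \<and> limsup (\<lambda>t. ereal (y t)) = 1"
  proof (rule perfect_set_of_I_plays[OF tree])
    show "init_seg (I_play \<sigma> v) (Suc t) \<in> T" for v t
      using win by (rule I_winningD(1))
    show "\<exists>w1 w2. set w1 \<subseteq> {0, 1} \<and> set w2 \<subseteq> {0, 1} \<and> prefix u w1 \<and> prefix u w2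
      \<and> I_response \<sigma> w1 \<parallel> I_response \<sigma> w2" if "set u \<subseteq> {0, 1}" for u
      using win that by (rule I_response_splits)
  qed (rule that)
  have "P \<subseteq> branches T - B"
  proof
    fix x assume x: "x \<in> P"
    then obtain y where "x = I_play \<sigma> y" "limsup (\<lambda>t. ereal (y t)) = 1" using plays by blast
    then have "indicator B x \<noteq> (1::real)" using I_winningD(2)[OF win, of y] by auto
    then show "x \<in> branches T - B"
      using x perfect_in_tree_subset_branches[OF P(2)] by (auto simp: indicator_def split: if_splits)
  qed
  then show False using bernstein_in_treeD(2)[OF bern P] by blast
qed

theorem mainTheorem7:
  fixes A :: "'a set" and T :: "'a list set" and B :: "(nat \<Rightarrow> 'a) set"
  assumes "A \<noteq> {}" and "countable A"
    and "pruned_tree A T"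
    and "uncountable (branches T)"
    and "bernstein_in (tree_topology T) B"
  shows "\<not> (\<exists>\<sigma>. I_winning T (indicator B) \<sigma>) \<and> \<not> (\<exists>\<tau>. II_winning T (indicator B) \<tau>)"
  using not_I_winning[OF assms(3,5)] not_II_winning[OF assms(2-5)] by blast

end
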